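(* There exist finite sets $\mathcal{X},\mathcal{Y}$, a closed convex model class $\Pi\subseteq\Pi_{\mathrm{all}}$, an involution $\Phi$ on $\mathcal{X}$ defining a nontrivial coherence set $\mathcal{C}_{\mathrm{coh}}$, a source model $\pi_0\colon\mathcal{X}\to\Delta(\mathcal{Y})$ with $\pi_0\notin\Pi$, and a convex family $\mathcal{F}$ of Legendre generators such that the minimax solution $$\pi^*_{mm}=\arg\min_{\pi\in\Pi\cap\mathcal{C}_{\mathrm{coh}}}\max_{F\in\mathcal{F}}\mathsf{B}_F(\pi\parallel\pi_0)$$ is unique and there exist $F\in\mathcal{F}$ and $\pi^*\in\Pi\cap\mathcal{C}_{\mathrm{coh}}$ with $\mathsf{B}_F(\pi^*\parallel\pi^*_{mm})>\mathsf{B}_F(\pi^*\parallel\pi_0)$.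
   Context: A model is a map $\pi\colon\mathcal{X}\to\Delta(\mathcal{Y})$, identified with a vector in $\mathbb{R}^{\mathcal{X}\times\mathcal{Y}}$; $\Pi_{\mathrm{all}}=\Delta(\mathcal{Y})^{\mathcal{X}}$; $\mathcal{C}_{\mathrm{coh}}=\{\pi\in\Pi_{\mathrm{all}}:\pi(x)=\pi(\Phi(x))\ \forall x\}$. For a generator $F$ on $\mathbb{R}^{\mathcal{X}\times\mathcal{Y}}$, $\mathsf{B}_F(\pi\parallel\pi')=F(\pi)-F(\pi')-\langle\nabla F(\pi'),\pi-\pi'\rangle$. A Legendre generator is a proper closed convex function differentiable on the interior of its domain whose gradient is a bijection onto the interior of the domain of its conjugate. *)

theory Defs
  imports "HOL-Analysis.Analysis"
begin

text \<open>Models and vectors of R^(X x Y) are represented as functions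
  nat \<times> nat \<Rightarrow> real that vanish outside X \<times> Y, where X, Y are finite sets of
  natural numbers.\<close>

type_synonym vec = "nat \<times> nat \<Rightarrow> real"

definition vsp :: "nat set \<Rightarrow> nat set \<Rightarrow> vec set" where
  "vsp X Y = {v. \<forall>p. p \<notin> X \<times> Y \<longrightarrow> v p = 0}"

definition ip :: "nat set \<Rightarrow> nat set \<Rightarrow> vec \<Rightarrow> vec \<Rightarrow> real" where
  "ip X Y u v = (\<Sum>p\<in>X \<times> Y. u p * v p)"

definition vnorm :: "nat set \<Rightarrow> nat set \<Rightarrow> vec \<Rightarrow> real" where
  "vnorm X Y v = sqrt (ip X Y v v)"

definition vdiff :: "vec \<Rightarrow> vec \<Rightarrow> vec" where
  "vdiff u v = (\<lambda>p. u p - v p)"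

definition vcomb :: "real \<Rightarrow> vec \<Rightarrow> vec \<Rightarrow> vec" where
  "vcomb t u v = (\<lambda>p. t * u p + (1 - t) * v p)"

definition Pi_all :: "nat set \<Rightarrow> nat set \<Rightarrow> vec set" where
  "Pi_all X Y = {\<pi> \<in> vsp X Y. \<forall>x\<in>X. (\<forall>y\<in>Y. 0 \<le> \<pi> (x, y)) \<and> (\<Sum>y\<in>Y. \<pi> (x, y)) = 1}"

definition C_coh :: "nat set \<Rightarrow> nat set \<Rightarrow> (nat \<Rightarrow> nat) \<Rightarrow> vec set" where
  "C_coh X Y \<Phi> = {\<pi> \<in> Pi_all X Y. \<forall>x\<in>X. \<forall>y\<in>Y. \<pi> (x, y) = \<pi> (\<Phi> x, y)}"

definition vclosed :: "nat set \<Rightarrow> nat set \<Rightarrow> vec set \<Rightarrow> bool" where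
  "vclosed X Y S \<longleftrightarrow> S \<subseteq> vsp X Y \<and>
     (\<forall>s v. (\<forall>n. s n \<in> S) \<and> v \<in> vsp X Y \<and> (\<lambda>n. vnorm X Y (vdiff (s n) v)) \<longlonglongrightarrow> 0
        \<longrightarrow> v \<in> S)"

definition vconvex :: "vec set \<Rightarrow> bool" where
  "vconvex S \<longleftrightarrow> (\<forall>u\<in>S. \<forall>v\<in>S. \<forall>t. 0 \<le> t \<and> t \<le> 1 \<longrightarrow> vcomb t u v \<in> S)"

definition vinterior :: "nat set \<Rightarrow> nat set \<Rightarrow> vec set \<Rightarrow> vec set" where
  "vinterior X Y S = {x \<in> S. \<exists>r>0. \<forall>y\<in>vsp X Y. vnorm X Y (vdiff y x) < r \<longrightarrow> y \<in> S}"

text \<open>Generators: extended-real valued functions on \<real>^(X\<times>Y)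
  (values outside the subspace vsp X Y are irrelevant).\<close>

definition edom :: "nat set \<Rightarrow> nat set \<Rightarrow> (vec \<Rightarrow> ereal) \<Rightarrow> vec set" where
  "edom X Y F = {x \<in> vsp X Y. F x < \<infinity>}"

definition proper_fn :: "nat set \<Rightarrow> nat set \<Rightarrow> (vec \<Rightarrow> ereal) \<Rightarrow> bool" where
  "proper_fn X Y F \<longleftrightarrow> (\<forall>x\<in>vsp X Y. F x \<noteq> -\<infinity>) \<and> (\<exists>x\<in>vsp X Y. F x \<noteq> \<infinity>)"

definition closed_fn :: "nat set \<Rightarrow> nat set \<Rightarrow> (vec \<Rightarrow> ereal) \<Rightarrow> bool" where
  "closed_fn X Y F \<longleftrightarrow> (\<forall>s x. (\<forall>n. s n \<in> vsp X Y) \<and> x \<in> vsp X Y \<and>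
      (\<lambda>n. vnorm X Y (vdiff (s n) x)) \<longlonglongrightarrow> 0 \<longrightarrow> F x \<le> liminf (\<lambda>n. F (s n)))"

definition convex_fn :: "nat set \<Rightarrow> nat set \<Rightarrow> (vec \<Rightarrow> ereal) \<Rightarrow> bool" where
  "convex_fn X Y F \<longleftrightarrow> (\<forall>x\<in>vsp X Y. \<forall>y\<in>vsp X Y. \<forall>t. 0 \<le> t \<and> t \<le> 1 \<longrightarrow>
      F (vcomb t x y) \<le> ereal t * F x + ereal (1 - t) * F y)"

definition has_grad :: "nat set \<Rightarrow> nat set \<Rightarrow> (vec \<Rightarrow> ereal) \<Rightarrow> vec \<Rightarrow> vec \<Rightarrow> bool" where
  "has_grad X Y F x g \<longleftrightarrow> g \<in> vsp X Y \<and> \<bar>F x\<bar> \<noteq> \<infinity> \<and>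
     (\<forall>e>0. \<exists>d>0. \<forall>y\<in>vsp X Y. vnorm X Y (vdiff y x) < d \<longrightarrow>
        \<bar>F y - F x - ereal (ip X Y g (vdiff y x))\<bar> \<le> ereal (e * vnorm X Y (vdiff y x)))"

definition grad :: "nat set \<Rightarrow> nat set \<Rightarrow> (vec \<Rightarrow> ereal) \<Rightarrow> vec \<Rightarrow> vec" where
  "grad X Y F x = (THE g. has_grad X Y F x g)"

definition conj_fn :: "nat set \<Rightarrow> nat set \<Rightarrow> (vec \<Rightarrow> ereal) \<Rightarrow> vec \<Rightarrow> ereal" where
  "conj_fn X Y F y = (SUP x\<in>vsp X Y. ereal (ip X Y y x) - F x)"

definition legendre :: "nat set \<Rightarrow> nat set \<Rightarrow> (vec \<Rightarrow> ereal) \<Rightarrow> bool" where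
  "legendre X Y F \<longleftrightarrow> proper_fn X Y F \<and> closed_fn X Y F \<and> convex_fn X Y F \<and>
     (\<forall>x\<in>vinterior X Y (edom X Y F). \<exists>g. has_grad X Y F x g) \<and>
     bij_betw (grad X Y F) (vinterior X Y (edom X Y F))
        (vinterior X Y (edom X Y (conj_fn X Y F)))"

definition bregman :: "nat set \<Rightarrow> nat set \<Rightarrow> (vec \<Rightarrow> ereal) \<Rightarrow> vec \<Rightarrow> vec \<Rightarrow> ereal" where
  "bregman X Y F \<pi> \<pi>' = F \<pi> - F \<pi>' - ereal (ip X Y (grad X Y F \<pi>') (vdiff \<pi> \<pi>'))"

definition convex_family :: "(vec \<Rightarrow> ereal) set \<Rightarrow> bool" where
  "convex_family \<F> \<longleftrightarrow> (\<forall>F\<in>\<F>. \<forall>G\<in>\<F>. \<forall>t. 0 \<le> t \<and> t \<le> 1 \<longrightarrow>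
      (\<lambda>x. ereal t * F x + ereal (1 - t) * G x) \<in> \<F>)"

definition mm_obj :: "nat set \<Rightarrow> nat set \<Rightarrow> (vec \<Rightarrow> ereal) set \<Rightarrow> vec \<Rightarrow> vec \<Rightarrow> ereal" where
  "mm_obj X Y \<F> \<pi>0 \<pi> = (SUP F\<in>\<F>. bregman X Y F \<pi> \<pi>0)"

definition is_mm_sol :: "nat set \<Rightarrow> nat set \<Rightarrow> vec set \<Rightarrow> (nat \<Rightarrow> nat) \<Rightarrow> (vec \<Rightarrow> ereal) set
    \<Rightarrow> vec \<Rightarrow> vec \<Rightarrow> bool" where
  "is_mm_sol X Y M \<Phi> \<F> \<pi>0 \<pi> \<longleftrightarrow> \<pi> \<in> M \<inter> C_coh X Y \<Phi> \<and>
     (\<forall>\<pi>'\<in>M \<inter> C_coh X Y \<Phi>. mm_obj X Y \<F> \<pi>0 \<pi> \<le> mm_obj X Y \<F> \<pi>0 \<pi>')"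

end

theory Submission
  imports Defs
begin

text \<open>Take two contexts {0, 1}, swapped by the flip, and two labels {0, 1}.  The source
  model predicts label 1 in context 0 and label 0 in context 1, so it is not coherent; the
  coherent models are those predicting the same distribution (a, 1 - a) in both contexts.
  The family consists of the weighted quadratics F_w(x) = sum_p w_p x_p^2 / 2 with all
  weights in [1/4, 1].  Their Bregman divergences are the weighted squared distances
  sum_p w_p (y_p - x_p)^2 / 2, all dominated by the one with w = 1, so the minimax objective
  is a^2 + (1 - a)^2 and the unique minimax solution is a = 1/2.  For the weight 1/4 on
  context 0 and 1 on context 1, the coherent model a = 1 is at divergence 5/16 from the
  minimax solution but only 1/4 from the source.\<close>

section \<open>Coordinates and the Euclidean norm\<close>

lemma ip_self_nonneg: "0 \<le> ip X Y v v"
  unfolding ip_def by (intro sum_nonneg) simp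

lemma vnorm_nonneg: "0 \<le> vnorm X Y v"
  unfolding vnorm_def using ip_self_nonneg by simp

lemma vnorm_power2: "(vnorm X Y v)\<^sup>2 = ip X Y v v"
  unfolding vnorm_def using ip_self_nonneg by simp

lemma ip_scale_right: "ip X Y u (\<lambda>p. t * v p) = t * ip X Y u v"
  unfolding ip_def by (simp add: sum_distrib_left algebra_simps)

lemma ip_diff_left: "ip X Y (vdiff u w) v = ip X Y u v - ip X Y w v"
  unfolding ip_def vdiff_def by (simp add: sum_subtractf left_diff_distrib)

lemma vnorm_scale: "vnorm X Y (\<lambda>p. t * v p) = \<bar>t\<bar> * vnorm X Y v"
proof -
  have "ip X Y (\<lambda>p. t * v p) (\<lambda>p. t * v p) = t\<^sup>2 * ip X Y v v"
    unfolding ip_def by (simp add: sum_distrib_left power2_eq_square algebra_simps)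
  then show ?thesis
    unfolding vnorm_def by (simp add: real_sqrt_mult)
qed

lemma coord_power2_le_ip:
  assumes "finite X" "finite Y" "p \<in> X \<times> Y"
  shows "(v p)\<^sup>2 \<le> ip X Y v v"
  unfolding ip_def power2_eq_square using assms by (intro member_le_sum) auto

lemma abs_coord_le_vnorm:
  assumes "finite X" "finite Y" "p \<in> X \<times> Y"
  shows "\<bar>v p\<bar> \<le> vnorm X Y v"
  using real_sqrt_le_mono[OF coord_power2_le_ip[OF assms]] unfolding vnorm_def by simp

lemma vnorm_eq_0_imp_eq:
  assumes "finite X" "finite Y" "u \<in> vsp X Y" "v \<in> vsp X Y" "vnorm X Y (vdiff u v) = 0"
  shows "u = v"
proof
  fix p
  show "u p = v p"
  proof (cases "p \<in> X \<times> Y")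
    case True
    then show ?thesis
      using abs_coord_le_vnorm[OF assms(1,2) True, of "vdiff u v"] assms(5)
      by (simp add: vdiff_def)
  next
    case False
    then show ?thesis using assms(3,4) by (cases p) (auto simp: vsp_def)
  qed
qed

lemma vnorm_tendsto_coord:
  assumes "finite X" "finite Y" "p \<in> X \<times> Y"
    and "(\<lambda>n. vnorm X Y (vdiff (s n) v)) \<longlonglongrightarrow> 0"
  shows "(\<lambda>n. s n p) \<longlonglongrightarrow> v p"
proof -
  have "(\<lambda>n. s n p - v p) \<longlonglongrightarrow> 0"
    using abs_coord_le_vnorm[OF assms(1-3), where v = "vdiff (s n) v" for n]
    by (intro Lim_null_comparison[OF _ assms(4)] always_eventually) (simp add: vdiff_def)
  then show ?thesis by (simp add: LIM_zero_iff)
qed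

lemma vinterior_vsp: "vinterior X Y (vsp X Y) = vsp X Y"
  unfolding vinterior_def by (auto intro!: exI[of _ "1::real"])

lemma has_grad_real:
  "has_grad X Y (\<lambda>z. ereal (f z)) x g \<longleftrightarrow> g \<in> vsp X Y \<and>
     (\<forall>e>0. \<exists>d>0. \<forall>y\<in>vsp X Y. vnorm X Y (vdiff y x) < d \<longrightarrow>
        \<bar>f y - f x - ip X Y g (vdiff y x)\<bar> \<le> e * vnorm X Y (vdiff y x))"
  unfolding has_grad_def by simp

text \<open>Two gradients g1, g2 of f at x give |<g1 - g2, y - x>| \<le> 2 e |y - x| near x;
  testing with y - x a small multiple of g1 - g2 yields |g1 - g2| \<le> 2 e.\<close>
lemma has_grad_unique:
  assumes fin: "finite X" "finite Y" and x: "x \<in> vsp X Y"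
    and g1: "has_grad X Y (\<lambda>z. ereal (f z)) x g1"
    and g2: "has_grad X Y (\<lambda>z. ereal (f z)) x g2"
  shows "g1 = g2"
proof -
  define h where "h = vdiff g1 g2"
  define N where "N = vnorm X Y h"
  have g_vsp: "g1 \<in> vsp X Y" "g2 \<in> vsp X Y"
    using g1 g2 by (simp_all add: has_grad_real)
  have N_le: "N \<le> 2 * e" if e: "e > 0" and N_pos: "N > 0" for e
  proof -
    obtain d1 where d1: "d1 > 0" "\<And>y. y \<in> vsp X Y \<Longrightarrow> vnorm X Y (vdiff y x) < d1 \<Longrightarrow>
        \<bar>f y - f x - ip X Y g1 (vdiff y x)\<bar> \<le> e * vnorm X Y (vdiff y x)"
      using g1 e unfolding has_grad_real by blast
    obtain d2 where d2: "d2 > 0" "\<And>y. y \<in> vsp X Y \<Longrightarrow> vnorm X Y (vdiff y x) < d2 \<Longrightarrow>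
        \<bar>f y - f x - ip X Y g2 (vdiff y x)\<bar> \<le> e * vnorm X Y (vdiff y x)"
      using g2 e unfolding has_grad_real by blast
    define t where "t = min d1 d2 / (2 * N)"
    define y where "y = (\<lambda>p. x p + t * h p)"
    have t_pos: "t > 0" unfolding t_def using d1 d2 N_pos by simp
    have y_vsp: "y \<in> vsp X Y"
      using x g_vsp unfolding y_def h_def vsp_def vdiff_def by auto
    have step: "vdiff y x = (\<lambda>p. t * h p)"
      unfolding y_def vdiff_def by simp
    have norm_step: "vnorm X Y (vdiff y x) = t * N"
      unfolding step vnorm_scale N_def using t_pos by simp
    have "t * N < d1" "t * N < d2"
      unfolding t_def using N_pos d1 d2 by (auto simp: field_simps)
    then have "\<bar>f y - f x - ip X Y g1 (vdiff y x)\<bar> \<le> e * (t * N)"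
      "\<bar>f y - f x - ip X Y g2 (vdiff y x)\<bar> \<le> e * (t * N)"
      using d1(2)[OF y_vsp] d2(2)[OF y_vsp] unfolding norm_step by simp_all
    moreover have "ip X Y g1 (vdiff y x) - ip X Y g2 (vdiff y x) = t * N\<^sup>2"
      unfolding step ip_scale_right N_def vnorm_power2 h_def ip_diff_left by (simp add: right_diff_distrib)
    ultimately have "t * N * N \<le> t * N * (2 * e)"
      unfolding abs_le_iff power2_eq_square by argo
    then show "N \<le> 2 * e"
      using t_pos N_pos by simp
  qed
  have "\<not> N > 0"
    using N_le[of "N / 4"] by fastforce
  then have "vnorm X Y (vdiff g1 g2) = 0"
    using vnorm_nonneg[of X Y h] unfolding N_def h_def by simp
  then show ?thesis using vnorm_eq_0_imp_eq[OF fin g_vsp] by simp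
qed

section \<open>Coherence sets\<close>

lemma vconvex_C_coh: "vconvex (C_coh X Y \<Phi>)"
  unfolding vconvex_def
proof (intro ballI allI impI)
  fix u v and t :: real
  assume u: "u \<in> C_coh X Y \<Phi>" and v: "v \<in> C_coh X Y \<Phi>" and t: "0 \<le> t \<and> t \<le> 1"
  have "(\<Sum>y\<in>Y. vcomb t u v (x, y)) = 1" if "x \<in> X" for x
  proof -
    have "(\<Sum>y\<in>Y. u (x, y)) = 1" "(\<Sum>y\<in>Y. v (x, y)) = 1"
      using u v that unfolding C_coh_def Pi_all_def by blast+
    then show ?thesis
      by (simp add: vcomb_def sum.distrib sum_distrib_left[symmetric])
  qed
  moreover have "vcomb t u v \<in> vsp X Y"
    using u v by (auto simp: C_coh_def Pi_all_def vsp_def vcomb_def)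
  ultimately show "vcomb t u v \<in> C_coh X Y \<Phi>"
    using u v t by (auto simp: C_coh_def Pi_all_def vcomb_def)
qed

lemma vclosed_C_coh:
  assumes fin: "finite X" "finite Y" and \<Phi>: "\<Phi> ` X \<subseteq> X"
  shows "vclosed X Y (C_coh X Y \<Phi>)"
  unfolding vclosed_def
proof (intro conjI allI impI)
  show "C_coh X Y \<Phi> \<subseteq> vsp X Y"
    by (auto simp: C_coh_def Pi_all_def)
  fix s v
  assume a: "(\<forall>n. s n \<in> C_coh X Y \<Phi>) \<and> v \<in> vsp X Y \<and> (\<lambda>n. vnorm X Y (vdiff (s n) v)) \<longlonglongrightarrow> 0"
  then have s: "\<And>n. s n \<in> C_coh X Y \<Phi>" by blast
  have lim: "(\<lambda>n. s n (x, y)) \<longlonglongrightarrow> v (x, y)" if "x \<in> X" "y \<in> Y" for x y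
    using a vnorm_tendsto_coord[OF fin] that by blast
  have "0 \<le> v (x, y)" if "x \<in> X" "y \<in> Y" for x y
  proof (rule LIMSEQ_le_const[OF lim[OF that]])
    have "0 \<le> s n (x, y)" for n
      using s[of n] that unfolding C_coh_def Pi_all_def by blast
    then show "\<exists>N. \<forall>n\<ge>N. 0 \<le> s n (x, y)" by blast
  qed
  moreover have "(\<Sum>y\<in>Y. v (x, y)) = 1" if "x \<in> X" for x
  proof (rule LIMSEQ_unique)
    show "(\<lambda>n. \<Sum>y\<in>Y. s n (x, y)) \<longlonglongrightarrow> (\<Sum>y\<in>Y. v (x, y))"
      using lim that by (intro tendsto_sum) auto
    have "(\<Sum>y\<in>Y. s n (x, y)) = 1" for n
      using s[of n] that unfolding C_coh_def Pi_all_def by blast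
    then show "(\<lambda>n. \<Sum>y\<in>Y. s n (x, y)) \<longlonglongrightarrow> 1"
      by simp
  qed
  moreover have "v (x, y) = v (\<Phi> x, y)" if "x \<in> X" "y \<in> Y" for x y
  proof (rule LIMSEQ_unique[OF lim[OF that]])
    show "(\<lambda>n. s n (x, y)) \<longlonglongrightarrow> v (\<Phi> x, y)"
      using lim[of "\<Phi> x" y] s \<Phi> that by (simp add: C_coh_def image_subset_iff)
  qed
  ultimately show "v \<in> C_coh X Y \<Phi>"
    using a by (auto simp: C_coh_def Pi_all_def)
qed

section \<open>Weighted quadratic generators\<close>

definition wquad :: "nat set \<Rightarrow> nat set \<Rightarrow> vec \<Rightarrow> vec \<Rightarrow> real" where
  "wquad X Y w x = (\<Sum>p\<in>X \<times> Y. w p * (x p)\<^sup>2 / 2)"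

definition wquad_gen :: "nat set \<Rightarrow> nat set \<Rightarrow> vec \<Rightarrow> vec \<Rightarrow> ereal" where
  "wquad_gen X Y w = (\<lambda>x. ereal (wquad X Y w x))"

definition wquad_grad :: "nat set \<Rightarrow> nat set \<Rightarrow> vec \<Rightarrow> vec \<Rightarrow> vec" where
  "wquad_grad X Y w x = (\<lambda>p. if p \<in> X \<times> Y then w p * x p else 0)"

lemma wquad_taylor:
  "wquad X Y w y - wquad X Y w x - ip X Y (wquad_grad X Y w x) (vdiff y x)
     = wquad X Y w (vdiff y x)"
  unfolding wquad_def ip_def wquad_grad_def vdiff_def sum_subtractf[symmetric]
  by (rule sum.cong) (auto simp: power2_eq_square algebra_simps)

lemma wquad_mono: "(\<And>p. p \<in> X \<times> Y \<Longrightarrow> w p \<le> w' p) \<Longrightarrow> wquad X Y w x \<le> wquad X Y w' x"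
  unfolding wquad_def by (intro sum_mono divide_right_mono mult_right_mono) auto

lemma wquad_vcomb_weights:
  "wquad X Y (vcomb t u v) x = t * wquad X Y u x + (1 - t) * wquad X Y v x"
  unfolding wquad_def vcomb_def sum_distrib_left sum.distrib[symmetric]
  by (rule sum.cong) (auto simp: field_simps)

lemma abs_wquad_le:
  assumes "finite X" "finite Y"
  shows "\<bar>wquad X Y w x\<bar> \<le> (\<Sum>p\<in>X \<times> Y. \<bar>w p\<bar>) / 2 * (vnorm X Y x)\<^sup>2"
proof -
  have "\<bar>wquad X Y w x\<bar> \<le> (\<Sum>p\<in>X \<times> Y. \<bar>w p\<bar> * (x p)\<^sup>2 / 2)"
    unfolding wquad_def by (rule order_trans[OF sum_abs]) (simp add: abs_mult)
  also have "\<dots> \<le> (\<Sum>p\<in>X \<times> Y. \<bar>w p\<bar> * ip X Y x x / 2)"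
    using coord_power2_le_ip[OF assms]
    by (intro sum_mono divide_right_mono mult_left_mono) auto
  finally show ?thesis
    by (simp add: vnorm_power2 sum_divide_distrib[symmetric] sum_distrib_right[symmetric])
qed

lemma wquad_has_grad:
  assumes "finite X" "finite Y"
  shows "has_grad X Y (wquad_gen X Y w) x (wquad_grad X Y w x)"
  unfolding wquad_gen_def has_grad_real
proof (intro conjI allI impI)
  show "wquad_grad X Y w x \<in> vsp X Y"
    by (simp add: wquad_grad_def vsp_def)
  define C where "C = (\<Sum>p\<in>X \<times> Y. \<bar>w p\<bar>) / 2"
  have C_nonneg: "0 \<le> C"
    unfolding C_def by (simp add: sum_nonneg)
  fix e :: real
  assume e: "e > 0"
  show "\<exists>d>0. \<forall>y\<in>vsp X Y. vnorm X Y (vdiff y x) < d \<longrightarrow>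
     \<bar>wquad X Y w y - wquad X Y w x - ip X Y (wquad_grad X Y w x) (vdiff y x)\<bar>
       \<le> e * vnorm X Y (vdiff y x)"
  proof (intro exI[of _ "e / (C + 1)"] conjI ballI impI)
    show "e / (C + 1) > 0"
      using e C_nonneg by simp
    fix y
    define n where "n = vnorm X Y (vdiff y x)"
    assume "vnorm X Y (vdiff y x) < e / (C + 1)"
    then have "(C + 1) * n < e"
      using C_nonneg unfolding n_def by (simp add: pos_less_divide_eq mult.commute)
    then have "C * n \<le> e"
      using vnorm_nonneg[of X Y "vdiff y x"] unfolding n_def distrib_right by linarith
    then have "C * n\<^sup>2 \<le> e * n"
      using vnorm_nonneg[of X Y "vdiff y x"] unfolding n_def power2_eq_square
      by (metis mult.assoc mult_right_mono)
    then show "\<bar>wquad X Y w y - wquad X Y w x - ip X Y (wquad_grad X Y w x) (vdiff y x)\<bar>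
       \<le> e * vnorm X Y (vdiff y x)"
      unfolding wquad_taylor n_def C_def using abs_wquad_le[OF assms, of w "vdiff y x"] by linarith
  qed
qed

lemma grad_wquad_gen:
  assumes "finite X" "finite Y" "x \<in> vsp X Y"
  shows "grad X Y (wquad_gen X Y w) x = wquad_grad X Y w x"
  unfolding grad_def
proof (rule the_equality)
  show "has_grad X Y (wquad_gen X Y w) x (wquad_grad X Y w x)"
    using wquad_has_grad[OF assms(1,2)] .
  show "g = wquad_grad X Y w x" if "has_grad X Y (wquad_gen X Y w) x g" for g
    using has_grad_unique[OF assms] that wquad_has_grad[OF assms(1,2)]
    unfolding wquad_gen_def by blast
qed

lemma bregman_wquad_gen:
  assumes "finite X" "finite Y" "x \<in> vsp X Y"
  shows "bregman X Y (wquad_gen X Y w) y x = ereal (wquad X Y w (vdiff y x))"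
  unfolding bregman_def grad_wquad_gen[OF assms] using wquad_taylor[of X Y w y x]
  by (simp add: wquad_gen_def)

lemma edom_wquad_gen: "edom X Y (wquad_gen X Y w) = vsp X Y"
  unfolding edom_def wquad_gen_def by auto

text \<open>Completing the square: y x - w x^2/2 \<le> y^2/(2w) coordinatewise.\<close>
lemma edom_conj_wquad_gen:
  assumes w: "\<And>p. p \<in> X \<times> Y \<Longrightarrow> 0 < w p"
  shows "edom X Y (conj_fn X Y (wquad_gen X Y w)) = vsp X Y"
proof -
  have "conj_fn X Y (wquad_gen X Y w) y \<le> ereal (\<Sum>p\<in>X \<times> Y. (y p)\<^sup>2 / (2 * w p))" for y
    unfolding conj_fn_def wquad_gen_def
  proof (rule SUP_least)
    fix x
    have "ip X Y y x - wquad X Y w x \<le> (\<Sum>p\<in>X \<times> Y. (y p)\<^sup>2 / (2 * w p))"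
      unfolding ip_def wquad_def sum_subtractf[symmetric]
    proof (rule sum_mono)
      fix p
      assume "p \<in> X \<times> Y"
      then have wp: "0 < w p" using w by auto
      have "(y p)\<^sup>2 / (2 * w p) - (y p * x p - w p * (x p)\<^sup>2 / 2) = (y p - w p * x p)\<^sup>2 / (2 * w p)"
        using wp by (simp add: field_simps power2_eq_square)
      moreover have "0 \<le> (y p - w p * x p)\<^sup>2 / (2 * w p)"
        using wp by simp
      ultimately show "y p * x p - w p * (x p)\<^sup>2 / 2 \<le> (y p)\<^sup>2 / (2 * w p)"
        by linarith
    qed
    then show "ereal (ip X Y y x) - ereal (wquad X Y w x) \<le> ereal (\<Sum>p\<in>X \<times> Y. (y p)\<^sup>2 / (2 * w p))"
      by simp
  qed
  then show ?thesis
    unfolding edom_def using order.strict_trans1 by fastforce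
qed

lemma closed_wquad_gen:
  assumes fin: "finite X" "finite Y"
  shows "closed_fn X Y (wquad_gen X Y w)"
  unfolding closed_fn_def
proof (intro allI impI)
  fix s x
  assume "(\<forall>n. s n \<in> vsp X Y) \<and> x \<in> vsp X Y \<and> (\<lambda>n. vnorm X Y (vdiff (s n) x)) \<longlonglongrightarrow> 0"
  then have "(\<lambda>n. s n p) \<longlonglongrightarrow> x p" if "p \<in> X \<times> Y" for p
    using vnorm_tendsto_coord[OF fin that] by blast
  then have "(\<lambda>n. wquad X Y w (s n)) \<longlonglongrightarrow> wquad X Y w x"
    unfolding wquad_def by (auto intro!: tendsto_intros)
  then have "liminf (\<lambda>n. wquad_gen X Y w (s n)) = wquad_gen X Y w x"
    unfolding wquad_gen_def by (intro lim_imp_Liminf) simp_all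
  then show "wquad_gen X Y w x \<le> liminf (\<lambda>n. wquad_gen X Y w (s n))"
    by simp
qed

lemma convex_wquad_gen:
  assumes w: "\<And>p. p \<in> X \<times> Y \<Longrightarrow> 0 \<le> w p"
  shows "convex_fn X Y (wquad_gen X Y w)"
  unfolding convex_fn_def
proof (intro ballI allI impI)
  fix x y :: vec and t :: real
  assume t: "0 \<le> t \<and> t \<le> 1"
  have "wquad X Y w (vcomb t x y) \<le> t * wquad X Y w x + (1 - t) * wquad X Y w y"
    unfolding wquad_def vcomb_def sum_distrib_left sum.distrib[symmetric]
  proof (rule sum_mono)
    fix p
    assume "p \<in> X \<times> Y"
    then have "0 \<le> w p * t * (1 - t) * (x p - y p)\<^sup>2 / 2"
      using w t by simp
    moreover have "t * (w p * (x p)\<^sup>2 / 2) + (1 - t) * (w p * (y p)\<^sup>2 / 2)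
        - w p * (t * x p + (1 - t) * y p)\<^sup>2 / 2 = w p * t * (1 - t) * (x p - y p)\<^sup>2 / 2"
      by (simp add: field_simps power2_eq_square)
    ultimately show "w p * (t * x p + (1 - t) * y p)\<^sup>2 / 2
        \<le> t * (w p * (x p)\<^sup>2 / 2) + (1 - t) * (w p * (y p)\<^sup>2 / 2)"
      by linarith
  qed
  then show "wquad_gen X Y w (vcomb t x y) \<le> ereal t * wquad_gen X Y w x + ereal (1 - t) * wquad_gen X Y w y"
    by (simp add: wquad_gen_def)
qed

lemma legendre_wquad_gen:
  assumes fin: "finite X" "finite Y" and w: "\<And>p. p \<in> X \<times> Y \<Longrightarrow> 0 < w p"
  shows "legendre X Y (wquad_gen X Y w)"
proof -
  have "bij_betw (wquad_grad X Y w) (vsp X Y) (vsp X Y)"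
    by (rule bij_betw_byWitness[where f' = "\<lambda>y p. if p \<in> X \<times> Y then y p / w p else 0"])
      (use w in \<open>force simp: wquad_grad_def vsp_def fun_eq_iff\<close>)+
  then have "bij_betw (grad X Y (wquad_gen X Y w)) (vsp X Y) (vsp X Y)"
    by (rule bij_betw_cong[THEN iffD2, rotated]) (simp add: grad_wquad_gen[OF fin])
  moreover have "proper_fn X Y (wquad_gen X Y w)"
    by (auto simp: proper_fn_def wquad_gen_def vsp_def)
  moreover have "convex_fn X Y (wquad_gen X Y w)"
    using w by (intro convex_wquad_gen) (simp add: less_imp_le)
  moreover have conj_dom: "edom X Y (conj_fn X Y (wquad_gen X Y w)) = vsp X Y"
    using w by (rule edom_conj_wquad_gen)
  ultimately show ?thesis
    unfolding legendre_def vinterior_vsp edom_wquad_gen conj_dom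
    using closed_wquad_gen[OF fin] wquad_has_grad[OF fin] by blast
qed

lemma convex_family_wquad_gen:
  assumes "vconvex W"
  shows "convex_family (wquad_gen X Y ` W)"
  unfolding convex_family_def
proof (intro ballI allI impI)
  fix F G and t :: real
  assume "F \<in> wquad_gen X Y ` W" "G \<in> wquad_gen X Y ` W" and t: "0 \<le> t \<and> t \<le> 1"
  then obtain u v where "u \<in> W" "v \<in> W" "F = wquad_gen X Y u" "G = wquad_gen X Y v"
    by blast
  moreover from this have "vcomb t u v \<in> W"
    using assms t unfolding vconvex_def by blast
  ultimately show "(\<lambda>x. ereal t * F x + ereal (1 - t) * G x) \<in> wquad_gen X Y ` W"
    by (auto simp: wquad_gen_def wquad_vcomb_weights intro!: image_eqI[where x = "vcomb t u v"])
qed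

lemma mm_obj_wquad_gen_dominant:
  assumes "finite X" "finite Y" "\<pi>0 \<in> vsp X Y" "u \<in> W"
    and "\<And>w p. w \<in> W \<Longrightarrow> p \<in> X \<times> Y \<Longrightarrow> w p \<le> u p"
  shows "mm_obj X Y (wquad_gen X Y ` W) \<pi>0 \<pi> = ereal (wquad X Y u (vdiff \<pi> \<pi>0))"
proof -
  have "mm_obj X Y (wquad_gen X Y ` W) \<pi>0 \<pi> = (SUP w\<in>W. ereal (wquad X Y w (vdiff \<pi> \<pi>0)))"
    unfolding mm_obj_def image_image bregman_wquad_gen[OF assms(1-3)] ..
  also have "\<dots> = ereal (wquad X Y u (vdiff \<pi> \<pi>0))"
  proof (rule antisym)
    show "(SUP w\<in>W. ereal (wquad X Y w (vdiff \<pi> \<pi>0))) \<le> ereal (wquad X Y u (vdiff \<pi> \<pi>0))"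
      using assms(5) by (auto intro!: SUP_least wquad_mono)
    show "ereal (wquad X Y u (vdiff \<pi> \<pi>0)) \<le> (SUP w\<in>W. ereal (wquad X Y w (vdiff \<pi> \<pi>0)))"
      using assms(4) by (rule SUP_upper)
  qed
  finally show ?thesis .
qed

section \<open>Two contexts and two labels\<close>

definition bits :: "nat set" where
  "bits = {0, 1}"

definition flip :: "nat \<Rightarrow> nat" where
  "flip x = 1 - x"

definition src_model :: vec where
  "src_model = (\<lambda>p. if p = (0, 1) \<or> p = (1, 0) then 1 else 0)"

definition coh_model :: "real \<Rightarrow> vec" where
  "coh_model a = (\<lambda>p. if p \<in> bits \<times> bits then if snd p = 0 then a else 1 - a else 0)"

definition weight_box :: "vec set" where
  "weight_box = {w. \<forall>p\<in>bits \<times> bits. 1 / 4 \<le> w p \<and> w p \<le> 1}"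

abbreviation box_family :: "(vec \<Rightarrow> ereal) set" where
  "box_family \<equiv> wquad_gen bits bits ` weight_box"

definition skew_weight :: vec where
  "skew_weight = (\<lambda>p. if fst p = 0 then 1 / 4 else 1)"

lemma finite_bits: "finite bits"
  by (simp add: bits_def)

lemma sum_bits_times_bits:
  "(\<Sum>p\<in>bits \<times> bits. f p) = f (0, 0) + f (0, 1) + f (1, 0) + f (1, 1)"
proof -
  have "bits \<times> bits = {(0, 0), (0, 1), (1, 0), (1, 1)}"
    by (auto simp: bits_def)
  then show ?thesis by (simp add: add.assoc)
qed

lemma flip_involution: "flip ` bits \<subseteq> bits" "\<forall>x\<in>bits. flip (flip x) = x"
  by (auto simp: flip_def bits_def)

lemma src_model_vsp: "src_model \<in> vsp bits bits"
  by (auto simp: vsp_def src_model_def bits_def)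

lemma src_model_Pi_all: "src_model \<in> Pi_all bits bits"
  using src_model_vsp by (auto simp: Pi_all_def src_model_def bits_def)

lemma coh_model_vsp: "coh_model a \<in> vsp bits bits"
  by (simp add: vsp_def coh_model_def)

lemma coh_model_apply: "x \<in> bits \<Longrightarrow> y \<in> bits \<Longrightarrow> coh_model a (x, y) = (if y = 0 then a else 1 - a)"
  by (simp add: coh_model_def)

lemma coh_model_coherent: "a \<in> {0..1} \<Longrightarrow> coh_model a \<in> C_coh bits bits flip"
  using flip_involution(1) unfolding C_coh_def Pi_all_def
  by (auto simp: coh_model_vsp coh_model_apply image_subset_iff) (simp add: bits_def coh_model_def)

lemma C_coh_flip: "C_coh bits bits flip = coh_model ` {0..1}"
proof
  show "coh_model ` {0..1} \<subseteq> C_coh bits bits flip"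
    using coh_model_coherent by blast
  show "C_coh bits bits flip \<subseteq> coh_model ` {0..1}"
  proof
    fix \<pi>
    assume "\<pi> \<in> C_coh bits bits flip"
    then have vsp: "\<pi> \<in> vsp bits bits"
      and row: "(\<Sum>y\<in>bits. \<pi> (0, y)) = 1" "\<forall>y\<in>bits. 0 \<le> \<pi> (0, y)"
      and coh: "\<forall>x\<in>bits. \<forall>y\<in>bits. \<pi> (x, y) = \<pi> (flip x, y)"
      unfolding C_coh_def Pi_all_def bits_def by blast+
    have bits: "0 \<in> bits" "1 \<in> bits"
      by (simp_all add: bits_def)
    have "\<pi> (1, y) = \<pi> (0, y)" if "y \<in> bits" for y
      using coh[rule_format, OF bits(2) that] by (simp add: flip_def)
    moreover have "\<pi> (0, 1) = 1 - \<pi> (0, 0)" "0 \<le> \<pi> (0, 0)" "0 \<le> \<pi> (0, 1)"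
      using row by (simp_all add: bits_def)
    ultimately have "\<pi> = coh_model (\<pi> (0, 0))" "\<pi> (0, 0) \<in> {0..1}"
      using vsp bits by (auto simp: fun_eq_iff coh_model_def vsp_def bits_def)
    then show "\<pi> \<in> coh_model ` {0..1}" by blast
  qed
qed

lemma src_model_not_coherent: "src_model \<notin> C_coh bits bits flip"
proof
  assume "src_model \<in> C_coh bits bits flip"
  then obtain a where "src_model = coh_model a"
    unfolding C_coh_flip by blast
  then have "src_model (0, 0) = coh_model a (0, 0)" "src_model (1, 0) = coh_model a (1, 0)"
    by simp_all
  then show False
    by (simp add: src_model_def coh_model_def bits_def)
qed

lemma weight_box_pos: "w \<in> weight_box \<Longrightarrow> p \<in> bits \<times> bits \<Longrightarrow> 0 < w p"
  unfolding weight_box_def by (auto dest!: bspec[of _ _ p] intro: less_le_trans[of 0 "1 / 4"])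

lemma vconvex_weight_box: "vconvex weight_box"
  unfolding vconvex_def
proof (intro ballI allI impI)
  fix u v :: vec and t :: real
  assume u: "u \<in> weight_box" and v: "v \<in> weight_box" and t: "0 \<le> t \<and> t \<le> 1"
  have "1 / 4 \<le> vcomb t u v p \<and> vcomb t u v p \<le> 1" if "p \<in> bits \<times> bits" for p
  proof -
    have "1 / 4 \<le> u p" "u p \<le> 1" "1 / 4 \<le> v p" "v p \<le> 1"
      using u v that unfolding weight_box_def by blast+
    then have "t * (1 / 4) \<le> t * u p" "(1 - t) * (1 / 4) \<le> (1 - t) * v p"
      "t * u p \<le> t * 1" "(1 - t) * v p \<le> (1 - t) * 1"
      using t by (intro mult_left_mono; simp)+
    then show ?thesis
      unfolding vcomb_def left_diff_distrib by (intro conjI) linarith+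
  qed
  then show "vcomb t u v \<in> weight_box"
    unfolding weight_box_def by blast
qed

lemma skew_weight_in_box: "skew_weight \<in> weight_box"
  by (simp add: weight_box_def skew_weight_def)

lemma legendre_box_family: "F \<in> box_family \<Longrightarrow> legendre bits bits F"
  using weight_box_pos by (auto intro!: legendre_wquad_gen[OF finite_bits finite_bits])

lemma vinterior_edom_box_family:
  "F \<in> box_family \<Longrightarrow> \<pi> \<in> vsp bits bits \<Longrightarrow> \<pi> \<in> vinterior bits bits (edom bits bits F)"
  by (auto simp: edom_wquad_gen vinterior_vsp)

lemma mm_obj_coh_model:
  "mm_obj bits bits box_family src_model (coh_model a) = ereal (a\<^sup>2 + (1 - a)\<^sup>2)"
proof -
  have "mm_obj bits bits box_family src_model (coh_model a)
      = ereal (wquad bits bits (\<lambda>_. 1) (vdiff (coh_model a) src_model))"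
  proof (rule mm_obj_wquad_gen_dominant[OF finite_bits finite_bits])
    show "src_model \<in> vsp bits bits"
      by (rule src_model_vsp)
  qed (auto simp: weight_box_def)
  also have "\<dots> = ereal (a\<^sup>2 + (1 - a)\<^sup>2)"
    by (simp add: wquad_def sum_bits_times_bits vdiff_def coh_model_def src_model_def bits_def
        power2_eq_square algebra_simps)
  finally show ?thesis .
qed

lemma is_mm_sol_iff:
  "is_mm_sol bits bits (C_coh bits bits flip) flip box_family src_model \<pi> \<longleftrightarrow> \<pi> = coh_model (1 / 2)"
proof -
  have obj: "a\<^sup>2 + (1 - a)\<^sup>2 = 1 / 2 + 2 * (a - 1 / 2)\<^sup>2" for a :: real
    by (simp add: power2_eq_square algebra_simps)
  have argmin: "(\<forall>b\<in>{0..1}. a\<^sup>2 + (1 - a)\<^sup>2 \<le> b\<^sup>2 + (1 - b)\<^sup>2) \<longleftrightarrow> a = 1 / 2" for a :: real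
  proof
    assume "\<forall>b\<in>{0..1}. a\<^sup>2 + (1 - a)\<^sup>2 \<le> b\<^sup>2 + (1 - b)\<^sup>2"
    then have "(a - 1 / 2)\<^sup>2 \<le> 0"
      unfolding obj by (auto dest: bspec[of _ _ "1 / 2"])
    then show "a = 1 / 2" by simp
  next
    assume a: "a = 1 / 2"
    show "\<forall>b\<in>{0..1}. a\<^sup>2 + (1 - a)\<^sup>2 \<le> b\<^sup>2 + (1 - b)\<^sup>2"
      unfolding obj a by simp
  qed
  have "is_mm_sol bits bits (C_coh bits bits flip) flip box_family src_model \<pi> \<longleftrightarrow>
      (\<exists>a\<in>{0..1}. \<pi> = coh_model a \<and> (\<forall>b\<in>{0..1}. a\<^sup>2 + (1 - a)\<^sup>2 \<le> b\<^sup>2 + (1 - b)\<^sup>2))"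
    unfolding is_mm_sol_def C_coh_flip Int_absorb by (auto simp: mm_obj_coh_model)
  also have "\<dots> \<longleftrightarrow> \<pi> = coh_model (1 / 2)"
    unfolding argmin by (rule iffI) (blast, force)
  finally show ?thesis .
qed

lemma bregman_skew_weight:
  "bregman bits bits (wquad_gen bits bits skew_weight) (coh_model 1) (coh_model (1 / 2)) = ereal (5 / 16)"
  "bregman bits bits (wquad_gen bits bits skew_weight) (coh_model 1) src_model = ereal (1 / 4)"
  unfolding bregman_wquad_gen[OF finite_bits finite_bits coh_model_vsp]
    bregman_wquad_gen[OF finite_bits finite_bits src_model_vsp]
  by (simp_all add: wquad_def sum_bits_times_bits vdiff_def skew_weight_def coh_model_def
      src_model_def bits_def power2_eq_square)

lemma pythagorean_inequality_fails:
  "\<exists>F\<in>box_family. \<exists>\<pi>s\<in>C_coh bits bits flip.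
     coh_model (1 / 2) \<in> vinterior bits bits (edom bits bits F) \<and>
     bregman bits bits F \<pi>s (coh_model (1 / 2)) > bregman bits bits F \<pi>s src_model"
  using skew_weight_in_box coh_model_coherent[of 1] vinterior_edom_box_family[OF _ coh_model_vsp]
  by (intro bexI[of _ "coh_model 1"] bexI[of _ "wquad_gen bits bits skew_weight"])
    (auto simp: bregman_skew_weight)

theorem theorem6:
  shows "\<exists>(X::nat set) (Y::nat set) (M::vec set) (\<Phi>::nat \<Rightarrow> nat) (\<pi>0::vec)
            (\<F>::(vec \<Rightarrow> ereal) set).
    finite X \<and> finite Y \<and>
    M \<subseteq> Pi_all X Y \<and> vclosed X Y M \<and> vconvex M \<and>
    \<Phi> ` X \<subseteq> X \<and> (\<forall>x\<in>X. \<Phi> (\<Phi> x) = x) \<and> C_coh X Y \<Phi> \<noteq> Pi_all X Y \<and>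
    \<pi>0 \<in> Pi_all X Y \<and> \<pi>0 \<notin> M \<and>
    \<F> \<noteq> {} \<and> convex_family \<F> \<and> (\<forall>F\<in>\<F>. legendre X Y F) \<and>
    (\<forall>F\<in>\<F>. \<pi>0 \<in> vinterior X Y (edom X Y F)) \<and>
    (\<exists>!\<pi>. is_mm_sol X Y M \<Phi> \<F> \<pi>0 \<pi>) \<and>
    (\<exists>F\<in>\<F>. \<exists>\<pi>s\<in>M \<inter> C_coh X Y \<Phi>.
        (THE \<pi>. is_mm_sol X Y M \<Phi> \<F> \<pi>0 \<pi>) \<in> vinterior X Y (edom X Y F) \<and>
        bregman X Y F \<pi>s (THE \<pi>. is_mm_sol X Y M \<Phi> \<F> \<pi>0 \<pi>) > bregman X Y F \<pi>s \<pi>0)"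
proof -
  let ?M = "C_coh bits bits flip"
  have the_sol: "(THE \<pi>. is_mm_sol bits bits ?M flip box_family src_model \<pi>) = coh_model (1 / 2)"
    unfolding is_mm_sol_iff by simp
  have M: "?M \<subseteq> Pi_all bits bits" "?M \<noteq> Pi_all bits bits"
    using src_model_Pi_all src_model_not_coherent by (auto simp: C_coh_def)
  have family: "box_family \<noteq> {}" "\<forall>F\<in>box_family. legendre bits bits F"
      "\<forall>F\<in>box_family. src_model \<in> vinterior bits bits (edom bits bits F)"
    using skew_weight_in_box legendre_box_family vinterior_edom_box_family src_model_vsp by blast+
  have unique: "\<exists>!\<pi>. is_mm_sol bits bits ?M flip box_family src_model \<pi>"
    unfolding is_mm_sol_iff by simp
  have pythagoras: "\<exists>F\<in>box_family. \<exists>\<pi>s\<in>?M \<inter> ?M.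
      (THE \<pi>. is_mm_sol bits bits ?M flip box_family src_model \<pi>) \<in> vinterior bits bits (edom bits bits F) \<and>
      bregman bits bits F \<pi>s (THE \<pi>. is_mm_sol bits bits ?M flip box_family src_model \<pi>)
        > bregman bits bits F \<pi>s src_model"
    unfolding the_sol Int_absorb by (rule pythagorean_inequality_fails)
  show ?thesis
    by (intro exI[of _ bits] exI[of _ ?M] exI[of _ flip] exI[of _ src_model] exI[of _ box_family]
        conjI finite_bits M vclosed_C_coh[OF finite_bits finite_bits flip_involution(1)] vconvex_C_coh
        flip_involution src_model_Pi_all src_model_not_coherent family
        convex_family_wquad_gen[OF vconvex_weight_box] unique pythagoras)
qed

end
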